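(* Let $\mu>0$, $p\in(0,1]$, and let $\mathcal{B}_\mu$ be the collection of all $\{0,1,2,\dots\}$-valued random variables $D$ with $\mathbb{E}(D)=\mu$. Let $q^*=\inf_{D\in\mathcal{B}_\mu}q_{D,p}$. Then there exist $k\in\mathbb{N}$ and $D^*\in\mathcal{B}_\mu$ with $$\mathbb{P}(D^*=0)+\mathbb{P}(D^*=k)+\mathbb{P}(D^*=k+1)=1$$ such that $q_{D^*,p}=q^*$.
   Context: For an $\{0,1,2,\dots\}$-valued $D$ with $0<\mu_D=\mathbb{E}(D)<\infty$: $f_D(s)=\mathbb{E}(s^D)$, $\bar f_D(s)=f_D'(s)/\mu_D$ for $s\in[0,1]$. For $p\in(0,1]$ (thinning parameter: in the configuration model with i.i.d. degrees distributed as $D$, each edge is kept independently with probability $p$), set $g_{D,p}(s)=f_D(1-p+ps)$ and $\bar g_{D,p}(s)=\bar f_D(1-p+ps)$. $z_{D,p}$ is the smallest root in $[0,1]$ of $s=\bar g_{D,p}(s)$ and $q_{D,p}:=g_{D,p}(z_{D,p})$. ($1-q_{D,p}$ is the limiting fraction of vertices in the largest component of the thinned configuration model.) $\mathbb{N}=\{1,2,\dots\}$. *)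

theory Defs
  imports "HOL-Probability.Probability"
begin

text \<open>A {0,1,2,...}-valued random variable D is represented by its law, a pmf on nat.\<close>

definition mean_D :: "nat pmf \<Rightarrow> real" where
  "mean_D D = measure_pmf.expectation D real"

definition B_class :: "real \<Rightarrow> nat pmf set" where
  "B_class \<mu> = {D. integrable (measure_pmf D) real \<and> mean_D D = \<mu>}"

definition f_D :: "nat pmf \<Rightarrow> real \<Rightarrow> real" where
  "f_D D s = measure_pmf.expectation D (\<lambda>k. s ^ k)"

text \<open>f_D'(s) = E(D s^(D-1)) (termwise derivative of the power series, for s in [0,1]);
  fbar_D(s) = f_D'(s) / mu_D.\<close>
definition f_D_deriv :: "nat pmf \<Rightarrow> real \<Rightarrow> real" where
  "f_D_deriv D s = measure_pmf.expectation D (\<lambda>k. real k * s ^ (k - 1))"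

definition fbar_D :: "nat pmf \<Rightarrow> real \<Rightarrow> real" where
  "fbar_D D s = f_D_deriv D s / mean_D D"

definition g_Dp :: "nat pmf \<Rightarrow> real \<Rightarrow> real \<Rightarrow> real" where
  "g_Dp D p s = f_D D (1 - p + p * s)"

definition gbar_Dp :: "nat pmf \<Rightarrow> real \<Rightarrow> real \<Rightarrow> real" where
  "gbar_Dp D p s = fbar_D D (1 - p + p * s)"

definition z_Dp :: "nat pmf \<Rightarrow> real \<Rightarrow> real" where
  "z_Dp D p = Inf {s \<in> {0..1}. s = gbar_Dp D p s}"

definition q_Dp :: "nat pmf \<Rightarrow> real \<Rightarrow> real" where
  "q_Dp D p = g_Dp D p (z_Dp D p)"

end

theory Submission
  imports Defs
begin

text \<open>Let z = z_Dp D p and t = 1 - p + p z. If z = 1 then q_Dp D p = 1, the largest possible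
  value. Otherwise t < 1, and with the masses m_j = j * pmf D j the mean, 1 - f_D D t and
  f_D_deriv D t are linear in m, with coefficients 1, ell t j = (1 - t^j) / j and t^(j-1); the total
  probability has coefficients 1 / j. Both (ell t j, t^(j-1)) and (ell t j, 1 / j) lie on convex
  curves, so moving all of m onto the two consecutive points k, k + 1 whose ell-values bracket
  (1 - f_D D t) / \<mu> yields a law on {0, k, k + 1} with the same mean and the same f_D at t, a
  smaller derivative at t and total mass at most 1. Its gbar at z is then at most z, which puts
  its smallest root below z and hence its q_Dp below that of D. For fixed k the three-point laws
  form a compact one-parameter family on which q_Dp is attained, and q_Dp \<ge> 1 - \<mu> / k rules out
  all large k as soon as the infimum is below 1.\<close>

definition three_point :: "nat pmf \<Rightarrow> nat \<Rightarrow> bool" where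
  "three_point D k \<longleftrightarrow> k \<ge> 1 \<and> pmf D 0 + pmf D k + pmf D (Suc k) = 1"

lemma three_point_support:
  assumes "three_point D k" "a \<in> set_pmf D"
  shows "a \<in> {0, k, Suc k}"
proof (rule ccontr)
  assume a: "a \<notin> {0, k, Suc k}"
  have k: "k \<ge> 1" "pmf D 0 + pmf D k + pmf D (Suc k) = 1"
    using assms(1) by (auto simp: three_point_def)
  have "pmf D a + pmf D 0 + pmf D k + pmf D (Suc k) = measure_pmf.prob D {a, 0, k, Suc k}"
    using a k(1) by (subst measure_measure_pmf_finite) auto
  also have "\<dots> \<le> 1" by (rule measure_pmf.prob_le_1)
  finally show False using k(2) assms(2) pmf_positive[of a D] by linarith
qed

lemma three_point_integrable: "three_point D k \<Longrightarrow> integrable (measure_pmf D) (f :: nat \<Rightarrow> real)"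
  by (rule integrable_measure_pmf_finite, rule finite_subset[of _ "{0, k, Suc k}"])
     (use three_point_support in auto)

lemma three_point_expectation:
  assumes "three_point D k"
  shows "measure_pmf.expectation D f = f 0 * pmf D 0 + f k * pmf D k + f (Suc k) * pmf D (Suc k)"
proof -
  have "measure_pmf.expectation D f = (\<Sum>a\<in>{0, k, Suc k}. f a * pmf D a)"
    by (rule integral_measure_pmf_real) (use three_point_support[OF assms] in auto)
  then show ?thesis using assms by (simp add: three_point_def)
qed

lemma three_point_mean_pgf:
  assumes "three_point D k"
  shows "mean_D D = real k * pmf D k + real (Suc k) * pmf D (Suc k)"
    and "f_D D t = pmf D 0 + t ^ k * pmf D k + t ^ Suc k * pmf D (Suc k)"
    and "f_D_deriv D t = real k * t ^ (k - 1) * pmf D k + real (Suc k) * t ^ k * pmf D (Suc k)"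
  unfolding mean_D_def f_D_def f_D_deriv_def by (subst three_point_expectation[OF assms]; simp)+

lemma three_point_exists:
  assumes "k \<ge> 1" "x0 \<ge> 0" "a \<ge> 0" "b \<ge> 0" "x0 + a + b = 1"
  obtains D where "pmf D 0 = x0" "pmf D k = a" "pmf D (Suc k) = b"
proof -
  let ?xs = "[(0::nat, x0), (k, a), (Suc k, b)]"
  have wf: "pmf_of_list_wf ?xs" using assms by (intro pmf_of_list_wfI) auto
  show ?thesis
    by (rule that[of "pmf_of_list ?xs"]) (use assms in \<open>simp_all add: pmf_pmf_of_list[OF wf]\<close>)
qed

lemma three_point_with_mean:
  assumes k: "k \<ge> 1" and b: "0 \<le> b" "\<mu> - real k \<le> b" "real (Suc k) * b \<le> \<mu>"
  obtains D where "three_point D k" "D \<in> B_class \<mu>" "pmf D (Suc k) = b"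
proof -
  define a where "a = (\<mu> - real (Suc k) * b) / real k"
  have a: "0 \<le> a" using b k by (simp add: a_def)
  have "real k * (1 - a - b) = real k - \<mu> + b" using k by (simp add: a_def field_simps)
  then have "0 \<le> real k * (1 - a - b)" using b by simp
  then have x0: "0 \<le> 1 - a - b" using k by (simp add: zero_le_mult_iff)
  obtain D where D: "pmf D 0 = 1 - a - b" "pmf D k = a" "pmf D (Suc k) = b"
    using three_point_exists[OF k x0 a b(1)] by auto
  have tri: "three_point D k" using D k by (simp add: three_point_def)
  have "mean_D D = \<mu>" using three_point_mean_pgf(1)[OF tri] D k by (simp add: a_def)
  then have "D \<in> B_class \<mu>" using three_point_integrable[OF tri] by (simp add: B_class_def)
  then show ?thesis using that tri D(3) by blast
qed

lemma B_class_three_point_nonempty: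
  assumes "\<mu> > 0"
  obtains D k where "D \<in> B_class \<mu>" "three_point D k"
proof -
  define k where "k = nat \<lceil>\<mu>\<rceil>"
  have "(1::int) \<le> \<lceil>\<mu>\<rceil>" using assms by (simp add: one_le_ceiling)
  then have k: "k \<ge> 1" "\<mu> \<le> real k" by (auto simp: k_def le_nat_iff)
  show ?thesis
    by (rule three_point_with_mean[of k 0 \<mu>]) (use k assms that in auto)
qed

lemma above_supporting_line_of_decreasing_slopes:
  fixes X Y S :: "nat \<Rightarrow> real"
  assumes X: "\<And>n. X (Suc n) \<le> X n"
    and Y: "\<And>n. Y n - Y (Suc n) = S n * (X n - X (Suc n))"
    and S: "\<And>n. S (Suc n) \<le> S n"
  shows "Y k + S k * (X j - X k) \<le> Y j"
proof -
  define G where "G n = Y n - Y k - S k * (X n - X k)" for n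
  have G_step: "G (Suc n) - G n = (S k - S n) * (X n - X (Suc n))" for n
    unfolding G_def using Y[of n] by (simp add: algebra_simps)
  have S_le: "m \<le> n \<Longrightarrow> S n \<le> S m" for m n
    using decseq_SucI[of S] S by (simp add: decseq_def)
  have up: "G (k + m) \<ge> 0" for m
  proof (induction m)
    case (Suc m)
    have "(S k - S (k + m)) * (X (k + m) - X (Suc (k + m))) \<ge> 0"
      using X[of "k + m"] S_le[of k "k + m"] by simp
    then show ?case using G_step[of "k + m"] Suc by simp
  qed (simp add: G_def)
  have down: "G (k - m) \<ge> 0" for m
  proof (induction m)
    case (Suc m)
    show ?case
    proof (cases "m < k")
      case True
      then have "Suc (k - Suc m) = k - m" by simp
      moreover have "(S k - S (k - Suc m)) * (X (k - Suc m) - X (Suc (k - Suc m))) \<le> 0"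
        using X[of "k - Suc m"] S_le[of "k - Suc m" k] by (simp add: mult_nonpos_nonneg)
      ultimately show ?thesis using G_step[of "k - Suc m"] Suc by simp
    next
      case False
      then show ?thesis using Suc by (simp add: Suc_diff_le)
    qed
  qed (simp add: G_def)
  have "G j \<ge> 0"
    using up[of "j - k"] down[of "k - j"] by (cases "k \<le> j") simp_all
  then show ?thesis by (simp add: G_def)
qed

definition ell :: "real \<Rightarrow> nat \<Rightarrow> real" where
  "ell t j = (1 - t ^ j) / real j"

definition ell_slope :: "real \<Rightarrow> (nat \<Rightarrow> real) \<Rightarrow> nat \<Rightarrow> real" where
  "ell_slope t c n = (c n - c (Suc n)) / (ell t n - ell t (Suc n))"

text \<open>ell_gap t n = n (n + 1) (ell t n - ell t (n + 1)).\<close>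

definition ell_gap :: "real \<Rightarrow> nat \<Rightarrow> real" where
  "ell_gap t n = 1 - (real n + 1) * t ^ n + real n * t ^ Suc n"

lemma ell_gap_Suc: "ell_gap t (Suc n) - ell_gap t n = (real n + 1) * t ^ n * (1 - t)\<^sup>2"
  unfolding ell_gap_def by (simp add: power2_eq_square algebra_simps)

lemma ell_gap_mono:
  assumes "0 \<le> t"
  shows "ell_gap t n \<le> ell_gap t (Suc n)"
proof -
  have "0 \<le> (real n + 1) * t ^ n * (1 - t)\<^sup>2" using assms by simp
  then show ?thesis using ell_gap_Suc[of t n] by linarith
qed

lemma ell_gap_nonneg: "0 \<le> t \<Longrightarrow> 0 \<le> ell_gap t n"
proof (induction n)
  case (Suc n)
  then show ?case using ell_gap_mono[of t n] by linarith
qed (simp add: ell_gap_def)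

lemma ell_gap_pos:
  assumes "0 \<le> t" "t < 1" "n \<ge> 1"
  shows "0 < ell_gap t n"
proof -
  have "ell_gap t 1 = (1 - t)\<^sup>2" by (simp add: ell_gap_def power2_eq_square algebra_simps)
  then have "0 < ell_gap t 1" using assms by simp
  also have "ell_gap t 1 \<le> ell_gap t n"
    using assms(3) by (induction n) (auto simp: le_Suc_eq intro: order_trans[OF _ ell_gap_mono[OF assms(1)]])
  finally show ?thesis .
qed

lemma ell_diff:
  assumes "n \<ge> 1"
  shows "ell t n - ell t (Suc n) = ell_gap t n / (real n * (real n + 1))"
  using assms unfolding ell_def ell_gap_def by (simp add: field_simps)

lemma ell_decreasing:
  assumes "0 \<le> t" "t < 1" "n \<ge> 1"
  shows "ell t (Suc n) < ell t n"
proof -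
  have "0 < ell_gap t n / (real n * (real n + 1))" using ell_gap_pos[OF assms] assms(3) by simp
  then show ?thesis using ell_diff[OF assms(3), of t] by linarith
qed

lemma ell_slope_pow:
  assumes "0 \<le> t" "t < 1" "n \<ge> 1"
  shows "ell_slope t (\<lambda>j. t ^ (j - 1)) n = t ^ (n - 1) * (1 - t) * real n * (real n + 1) / ell_gap t n"
proof -
  have "t ^ (n - 1) - t ^ n = t ^ (n - 1) * (1 - t)"
    using assms(3) by (cases n) (simp_all add: algebra_simps)
  then show ?thesis
    unfolding ell_slope_def ell_diff[OF assms(3)] using ell_gap_pos[OF assms] assms(3) by simp
qed

lemma ell_slope_inverse:
  assumes "0 \<le> t" "t < 1" "n \<ge> 1"
  shows "ell_slope t (\<lambda>j. 1 / real j) n = 1 / ell_gap t n"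
proof -
  have "1 / real n - 1 / real (Suc n) = 1 / (real n * (real n + 1))"
    using assms(3) by (simp add: field_simps)
  then show ?thesis
    unfolding ell_slope_def ell_diff[OF assms(3)] using ell_gap_pos[OF assms] assms(3) by simp
qed

lemma ell_slope_inverse_antimono:
  assumes "0 \<le> t" "t < 1" "n \<ge> 1"
  shows "ell_slope t (\<lambda>j. 1 / real j) (Suc n) \<le> ell_slope t (\<lambda>j. 1 / real j) n"
  using ell_gap_pos[OF assms] ell_gap_mono[OF assms(1), of n] assms
  by (simp add: ell_slope_inverse frac_le)

definition pow_slope_gap :: "real \<Rightarrow> nat \<Rightarrow> real" where
  "pow_slope_gap t n = real n - (real n + 2) * t + (real n + 2) * t ^ Suc n - real n * t ^ Suc (Suc n)"

lemma pow_slope_gap_eq: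
  "real n * ell_gap t (Suc n) - t * (real n + 2) * ell_gap t n = pow_slope_gap t n"
  unfolding ell_gap_def pow_slope_gap_def by (simp add: power2_eq_square algebra_simps)

lemma pow_slope_gap_nonneg:
  assumes "0 \<le> t" "t \<le> 1"
  shows "0 \<le> pow_slope_gap t n"
proof (induction n)
  case (Suc n)
  have "pow_slope_gap t (Suc n) - pow_slope_gap t n = (1 - t) * ell_gap t (Suc n)"
    unfolding ell_gap_def pow_slope_gap_def by (simp add: power2_eq_square algebra_simps)
  moreover have "0 \<le> (1 - t) * ell_gap t (Suc n)"
    using ell_gap_nonneg[OF assms(1), of "Suc n"] assms(2) by simp
  ultimately show ?case using Suc by linarith
qed (simp add: pow_slope_gap_def)

lemma ell_slope_pow_antimono:
  assumes t: "0 \<le> t" "t < 1" and n: "n \<ge> 1"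
  shows "ell_slope t (\<lambda>j. t ^ (j - 1)) (Suc n) \<le> ell_slope t (\<lambda>j. t ^ (j - 1)) n"
proof -
  have g: "0 < ell_gap t n" "0 < ell_gap t (Suc n)" using ell_gap_pos t n by auto
  have c: "0 \<le> t ^ (n - 1) * (1 - t) * (real n + 1)" using t by simp
  have "t ^ n * (1 - t) * (real n + 1) * (real n + 2) * ell_gap t n
      \<le> t ^ (n - 1) * (1 - t) * real n * (real n + 1) * ell_gap t (Suc n)"
  proof -
    have "t ^ n = t * t ^ (n - 1)" using n by (cases n) simp_all
    then have "t ^ (n - 1) * (1 - t) * real n * (real n + 1) * ell_gap t (Suc n)
        - t ^ n * (1 - t) * (real n + 1) * (real n + 2) * ell_gap t n
        = t ^ (n - 1) * (1 - t) * (real n + 1) * pow_slope_gap t n"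
      by (simp flip: pow_slope_gap_eq add: algebra_simps)
    also have "\<dots> \<ge> 0" using c pow_slope_gap_nonneg[of t n] t by simp
    finally show ?thesis by simp
  qed
  moreover have "Suc n \<ge> 1" by simp
  ultimately show ?thesis
    unfolding ell_slope_pow[OF t n] ell_slope_pow[OF t \<open>Suc n \<ge> 1\<close>] using g
    by (simp add: divide_simps) (simp add: algebra_simps)
qed

lemma ell_affine_minorant:
  assumes t: "0 \<le> t" "t < 1" and k: "k \<ge> 1"
    and antimono: "\<And>n. n \<ge> 1 \<Longrightarrow> ell_slope t c (Suc n) \<le> ell_slope t c n"
  shows "(c k - ell_slope t c k * ell t k) * real j + ell_slope t c k * (1 - t ^ j) \<le> real j * c j"
proof (cases j)
  case (Suc n)
  obtain K where K: "k = Suc K" using k by (cases k) auto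
  have "c (Suc K) + ell_slope t c (Suc K) * (ell t (Suc n) - ell t (Suc K)) \<le> c (Suc n)"
  proof (rule above_supporting_line_of_decreasing_slopes[of "\<lambda>m. ell t (Suc m)" "\<lambda>m. c (Suc m)"
        "\<lambda>m. ell_slope t c (Suc m)"])
    show "ell t (Suc (Suc m)) \<le> ell t (Suc m)" for m using ell_decreasing[OF t, of "Suc m"] by simp
    show "c (Suc m) - c (Suc (Suc m))
        = ell_slope t c (Suc m) * (ell t (Suc m) - ell t (Suc (Suc m)))" for m
      using ell_decreasing[OF t, of "Suc m"] by (simp add: ell_slope_def)
  qed (simp add: antimono)
  from mult_left_mono[OF this, of "real j"]
  have "real j * (c k + ell_slope t c k * (ell t j - ell t k)) \<le> real j * c j"
    using Suc K by simp
  moreover have "(c k - ell_slope t c k * ell t k) * real j + ell_slope t c k * (1 - t ^ j)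
      = real j * (c k + ell_slope t c k * (ell t j - ell t k))"
    using Suc by (simp add: ell_def field_simps)
  ultimately show ?thesis by simp
qed simp

lemma integrable_pow: "0 \<le> (t::real) \<Longrightarrow> t \<le> 1 \<Longrightarrow> integrable (measure_pmf D) (\<lambda>j::nat. t ^ j)"
  by (rule measure_pmf.integrable_const_bound[where B=1]) (auto simp: power_le_one)

lemma expectation_affine_pgf:
  assumes "integrable (measure_pmf D) real" "0 \<le> t" "t \<le> 1"
  shows "measure_pmf.expectation D (\<lambda>j. A * real j + B * (1 - t ^ j))
    = A * mean_D D + B * (1 - f_D D t)"
  unfolding mean_D_def f_D_def using assms integrable_pow[OF assms(2,3), of D] by simp

lemma two_point_le_expectation:
  assumes D: "integrable (measure_pmf D) real" "integrable (measure_pmf D) (\<lambda>j. real j * c j)"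
    and t: "0 \<le> t" "t < 1" and k: "k \<ge> 1"
    and antimono: "\<And>n. n \<ge> 1 \<Longrightarrow> ell_slope t c (Suc n) \<le> ell_slope t c n"
    and ab: "a + b = mean_D D" "a * ell t k + b * ell t (Suc k) = 1 - f_D D t"
  shows "a * c k + b * c (Suc k) \<le> measure_pmf.expectation D (\<lambda>j. real j * c j)"
proof -
  define S where "S = ell_slope t c k"
  have "c (Suc k) = c k - S * (ell t k - ell t (Suc k))"
    using ell_decreasing[OF t k] by (simp add: S_def ell_slope_def)
  then have "a * c k + b * c (Suc k) = (c k - S * ell t k) * (a + b) + S * (a * ell t k + b * ell t (Suc k))"
    by (subst \<open>c (Suc k) = _\<close>) (simp add: algebra_simps)
  also have "\<dots> = measure_pmf.expectation D (\<lambda>j. (c k - S * ell t k) * real j + S * (1 - t ^ j))"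
    using expectation_affine_pgf[OF D(1) t(1)] t(2) ab by simp
  also have "\<dots> \<le> measure_pmf.expectation D (\<lambda>j. real j * c j)"
    using D integrable_pow[of t D] t
    by (intro integral_mono) (auto simp: S_def intro: ell_affine_minorant[OF t k antimono])
  finally show ?thesis .
qed

lemma pgf_deficit_bounds:
  assumes D: "integrable (measure_pmf D) real" "mean_D D > 0" and t: "0 \<le> t" "t < 1"
  shows "0 < 1 - f_D D t" "1 - f_D D t \<le> (1 - t) * mean_D D"
proof -
  have deficit: "1 - f_D D t = measure_pmf.expectation D (\<lambda>j. 1 - t ^ j)"
    using expectation_affine_pgf[OF D(1) t(1), of 0 1] t(2) by simp
  have nonneg: "0 \<le> 1 - t ^ j" for j :: nat using t by (simp add: power_le_one)
  have "1 + real j * (t - 1) \<le> (1 + (t - 1)) ^ j" for j :: nat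
    by (rule Bernoulli_inequality) (use t in auto)
  then have "measure_pmf.expectation D (\<lambda>j. 1 - t ^ j) \<le> measure_pmf.expectation D (\<lambda>j. (1 - t) * real j)"
    using D(1) integrable_pow[of t D] t by (intro integral_mono) (auto simp: algebra_simps)
  then show "1 - f_D D t \<le> (1 - t) * mean_D D" by (simp add: deficit mean_D_def)
  show "0 < 1 - f_D D t"
  proof (rule ccontr)
    assume "\<not> 0 < 1 - f_D D t"
    then have "measure_pmf.expectation D (\<lambda>j. 1 - t ^ j) = 0"
      using deficit integral_nonneg_AE[of "\<lambda>j. 1 - t ^ j" D] nonneg by fastforce
    then have "AE j in measure_pmf D. 1 - t ^ j = 0"
      using integrable_pow[of t D] t nonneg by (subst (asm) integral_nonneg_eq_0_iff_AE) auto
    moreover have "j = 0" if "1 - t ^ j = 0" for j :: nat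
      using power_less_one_iff[of t j] t that by auto
    ultimately have "AE j in measure_pmf D. real j = 0"
      by (auto elim!: AE_mp)
    then have "mean_D D = 0" unfolding mean_D_def by (rule integral_eq_zero_AE)
    then show False using D(2) by simp
  qed
qed

lemma ell_bracket:
  assumes t: "0 \<le> t" "t < 1" and L: "0 < L" "L \<le> ell t 1"
  obtains k where "k \<ge> 1" "ell t (Suc k) < L" "L \<le> ell t k"
proof -
  obtain N :: nat where N: "1 / L < real N" using reals_Archimedean2 by blast
  then have N1: "N \<ge> 1" using L by (cases N) auto
  have "ell t N \<le> 1 / real N" unfolding ell_def using t N1 by (simp add: divide_right_mono)
  also have "\<dots> < L" using N L N1 by (simp add: field_simps)
  finally have "ell t N < L" .
  have "\<exists>k\<ge>1. ell t (Suc k) < L \<and> L \<le> ell t k"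
  proof (rule ccontr)
    assume "\<not> ?thesis"
    then have step: "L \<le> ell t (Suc n)" if "n \<ge> 1" "L \<le> ell t n" for n
      using that by (auto simp: not_less)
    have "L \<le> ell t (Suc n)" for n
      by (induction n) (use L(2) in \<open>auto intro: step\<close>)
    then have "L \<le> ell t N" using N1 by (cases N) simp_all
    then show False using \<open>ell t N < L\<close> by simp
  qed
  then show ?thesis using that by blast
qed

lemma interpolation_weights:
  fixes x y L \<mu> :: real
  assumes "y < x" "y \<le> L" "L \<le> x" "0 \<le> \<mu>"
  obtains a b where "0 \<le> a" "0 \<le> b" "a + b = \<mu>" "a * x + b * y = \<mu> * L"
proof (rule that)
  show "0 \<le> \<mu> * (L - y) / (x - y)" "0 \<le> \<mu> * (x - L) / (x - y)" using assms by simp_all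
  have "\<mu> * (L - y) / (x - y) + \<mu> * (x - L) / (x - y) = \<mu> * (x - y) / (x - y)"
    by (subst add_divide_distrib[symmetric]) (simp add: algebra_simps)
  then show "\<mu> * (L - y) / (x - y) + \<mu> * (x - L) / (x - y) = \<mu>"
    using assms(1) by simp
  have "\<mu> * (L - y) / (x - y) * x + \<mu> * (x - L) / (x - y) * y
      = (\<mu> * (L - y) * x + \<mu> * (x - L) * y) / (x - y)"
    by (simp add: add_divide_distrib)
  also have "\<dots> = \<mu> * L * (x - y) / (x - y)"
    by (intro arg_cong2[where f = "(/)"]) (simp_all add: algebra_simps)
  finally show "\<mu> * (L - y) / (x - y) * x + \<mu> * (x - L) / (x - y) * y = \<mu> * L"
    using assms(1) by simp
qed

lemma three_point_reduction:
  assumes D: "integrable (measure_pmf D) real" "mean_D D = \<mu>" "\<mu> > 0" and t: "0 \<le> t" "t < 1"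
  obtains k D' where "three_point D' k" "mean_D D' = \<mu>" "f_D D' t = f_D D t"
    "f_D_deriv D' t \<le> f_D_deriv D t"
proof -
  define \<Lambda> where "\<Lambda> = 1 - f_D D t"
  have "0 < \<Lambda> / \<mu>" "\<Lambda> / \<mu> \<le> ell t 1"
    using pgf_deficit_bounds[OF D(1) _ t] D(2,3) by (simp_all add: \<Lambda>_def ell_def field_simps)
  then obtain k where k: "k \<ge> 1" "ell t (Suc k) < \<Lambda> / \<mu>" "\<Lambda> / \<mu> \<le> ell t k"
    using ell_bracket[OF t] by blast
  obtain a b where ab: "0 \<le> a" "0 \<le> b" "a + b = \<mu>" "a * ell t k + b * ell t (Suc k) = \<mu> * (\<Lambda> / \<mu>)"
    using interpolation_weights[of "ell t (Suc k)" "ell t k" "\<Lambda> / \<mu>" \<mu>] k D(3) by auto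
  then have ab: "0 \<le> a" "0 \<le> b" "a + b = \<mu>" "a * ell t k + b * ell t (Suc k) = \<Lambda>"
    using D(3) by simp_all
  have "a * (1 / real k) + b * (1 / real (Suc k))
      \<le> measure_pmf.expectation D (\<lambda>j. real j * (1 / real j))"
    using ab D(2) ell_slope_inverse_antimono[OF t]
    by (intro two_point_le_expectation[OF D(1) _ t k(1)])
       (auto simp: \<Lambda>_def intro: measure_pmf.integrable_const_bound[where B=1])
  also have "\<dots> \<le> 1"
    by (intro measure_pmf.integral_le_const measure_pmf.integrable_const_bound[where B=1]) auto
  finally have mass: "a / real k + b / real (Suc k) \<le> 1" by simp
  obtain D' where D': "pmf D' 0 = 1 - a / real k - b / real (Suc k)" "pmf D' k = a / real k"
      "pmf D' (Suc k) = b / real (Suc k)"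
    using three_point_exists[OF k(1), of "1 - a / real k - b / real (Suc k)" "a / real k" "b / real (Suc k)"]
      mass ab(1,2) by simp blast
  have tri: "three_point D' k" using D' k(1) by (simp add: three_point_def)
  show ?thesis
  proof (rule that[OF tri])
    show "mean_D D' = \<mu>" using three_point_mean_pgf(1)[OF tri] D' k(1) ab(3) by simp
    have "f_D D' t = 1 - a / real k - b / real (Suc k) + t ^ k * (a / real k)
        + t ^ Suc k * (b / real (Suc k))"
      using three_point_mean_pgf(2)[OF tri, of t] D' by simp
    also have "\<dots> = 1 - (a * ell t k + b * ell t (Suc k))"
      by (simp add: ell_def algebra_simps diff_divide_distrib)
    finally show "f_D D' t = f_D D t" using ab(4) by (simp add: \<Lambda>_def)
    have "f_D_deriv D' t = a * t ^ (k - 1) + b * t ^ (Suc k - 1)"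
      using three_point_mean_pgf(3)[OF tri, of t] D' k(1) by simp
    also have "\<dots> \<le> measure_pmf.expectation D (\<lambda>j. real j * t ^ (j - 1))"
      using ab D(2) ell_slope_pow_antimono[OF t] t
      by (intro two_point_le_expectation[OF D(1) _ t k(1)])
         (auto simp: \<Lambda>_def power_le_one mult_left_le intro: Bochner_Integration.integrable_bound[OF D(1)])
    finally show "f_D_deriv D' t \<le> f_D_deriv D t" by (simp add: f_D_deriv_def)
  qed
qed

lemma thinned_arg_bounds:
  fixes p s :: real
  assumes "0 \<le> p" "p \<le> 1" "0 \<le> s" "s \<le> 1"
  shows "0 \<le> 1 - p + p * s" "1 - p + p * s \<le> 1"
  using assms mult_left_le[of s p] mult_nonneg_nonneg[of p s] by linarith+

lemma thinned_arg_mono: "0 \<le> (p::real) \<Longrightarrow> s \<le> s' \<Longrightarrow> 1 - p + p * s \<le> 1 - p + p * s'"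
  using mult_left_mono[of s s' p] by simp

lemma f_D_mono:
  assumes "0 \<le> x" "x \<le> y" "y \<le> 1"
  shows "f_D D x \<le> f_D D y"
  unfolding f_D_def using assms integrable_pow[of x D] integrable_pow[of y D]
  by (intro integral_mono) (auto intro: power_mono)

lemma f_D_bounds:
  assumes "0 \<le> x" "x \<le> 1"
  shows "0 \<le> f_D D x" "f_D D x \<le> 1"
  unfolding f_D_def using assms
  by (auto intro!: integral_nonneg_AE measure_pmf.integral_le_const integrable_pow power_le_one)

lemma f_D_deriv_mono:
  assumes "integrable (measure_pmf D) real" "0 \<le> x" "x \<le> y" "y \<le> 1"
  shows "f_D_deriv D x \<le> f_D_deriv D y"
proof -
  have "integrable (measure_pmf D) (\<lambda>j. real j * s ^ (j - 1))" if "0 \<le> s" "s \<le> 1" for s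
    by (rule Bochner_Integration.integrable_bound[OF assms(1)])
       (use that in \<open>auto simp: power_le_one mult_left_le\<close>)
  then show ?thesis
    unfolding f_D_deriv_def using assms by (intro integral_mono mult_left_mono power_mono) auto
qed

lemma f_D_deriv_nonneg: "0 \<le> x \<Longrightarrow> 0 \<le> f_D_deriv D x"
  unfolding f_D_deriv_def by (auto intro!: integral_nonneg_AE)

definition gbar_roots :: "nat pmf \<Rightarrow> real \<Rightarrow> real set" where
  "gbar_roots D p = {s \<in> {0..1}. s = gbar_Dp D p s}"

lemma z_Dp_eq_Inf_gbar_roots: "z_Dp D p = Inf (gbar_roots D p)"
  unfolding z_Dp_def gbar_roots_def ..

lemma one_in_gbar_roots: "mean_D D > 0 \<Longrightarrow> 1 \<in> gbar_roots D p"
  unfolding gbar_roots_def gbar_Dp_def fbar_D_def f_D_deriv_def mean_D_def by simp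

lemma z_Dp_le_root: "s \<in> gbar_roots D p \<Longrightarrow> z_Dp D p \<le> s"
  unfolding z_Dp_eq_Inf_gbar_roots by (rule cInf_lower) (auto simp: gbar_roots_def intro: bdd_belowI[of _ 0])

text \<open>Only gbar z \<le> z is claimed: it follows from monotonicity of gbar alone, without the
  continuity needed to show that z is itself a root.\<close>

lemma z_Dp_bounds:
  assumes D: "integrable (measure_pmf D) real" "mean_D D > 0" and p: "0 < p" "p \<le> 1"
  shows "0 \<le> z_Dp D p" "z_Dp D p \<le> 1" "gbar_Dp D p (z_Dp D p) \<le> z_Dp D p"
proof -
  have ne: "gbar_roots D p \<noteq> {}" using one_in_gbar_roots[OF D(2)] by auto
  show z0: "0 \<le> z_Dp D p" unfolding z_Dp_eq_Inf_gbar_roots by (rule cInf_greatest[OF ne]) (auto simp: gbar_roots_def)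
  show z1: "z_Dp D p \<le> 1" by (rule z_Dp_le_root[OF one_in_gbar_roots[OF D(2)]])
  show "gbar_Dp D p (z_Dp D p) \<le> z_Dp D p"
  proof (rule field_le_epsilon)
    fix e :: real assume "0 < e"
    then obtain r where r: "r \<in> gbar_roots D p" "r < z_Dp D p + e"
      using cInf_lessD[OF ne, of "z_Dp D p + e"] unfolding z_Dp_eq_Inf_gbar_roots by auto
    have r01: "0 \<le> r" "r \<le> 1" "r = gbar_Dp D p r" using r(1) by (auto simp: gbar_roots_def)
    have "f_D_deriv D (1 - p + p * z_Dp D p) \<le> f_D_deriv D (1 - p + p * r)"
      using thinned_arg_bounds[of p] thinned_arg_mono[of p] p z0 r01 z_Dp_le_root[OF r(1)]
      by (intro f_D_deriv_mono[OF D(1)]) auto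
    then have "gbar_Dp D p (z_Dp D p) \<le> gbar_Dp D p r"
      unfolding gbar_Dp_def fbar_D_def using D(2) by (simp add: divide_right_mono)
    then show "gbar_Dp D p (z_Dp D p) \<le> z_Dp D p + e" using r01 r by linarith
  qed
qed

lemma q_Dp_bounds:
  assumes "integrable (measure_pmf D) real" "mean_D D > 0" "0 < p" "p \<le> 1"
  shows "0 \<le> q_Dp D p" "q_Dp D p \<le> 1"
  using z_Dp_bounds[OF assms] thinned_arg_bounds[of p "z_Dp D p"] assms(3,4) f_D_bounds
  unfolding q_Dp_def g_Dp_def by auto

lemma three_point_q_Dp_le:
  assumes tri: "three_point D k" and D: "mean_D D > 0" and p: "0 < p" "p \<le> 1"
    and s: "0 \<le> s" "s \<le> 1" "gbar_Dp D p s \<le> s"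
  shows "q_Dp D p \<le> g_Dp D p s"
proof -
  define h where "h x = gbar_Dp D p x - x" for x
  have "continuous_on {0..s} h"
    unfolding h_def gbar_Dp_def fbar_D_def three_point_mean_pgf(3)[OF tri]
    by (intro continuous_intros) (use D in auto)
  moreover have "0 \<le> h 0"
    unfolding h_def gbar_Dp_def fbar_D_def using p D by (auto intro!: divide_nonneg_pos f_D_deriv_nonneg)
  moreover have "h s \<le> 0" unfolding h_def using s by simp
  ultimately obtain x where x: "0 \<le> x" "x \<le> s" "h x = 0"
    using IVT2'[of h s 0 0] s(1) by auto
  then have "x \<in> gbar_roots D p" using s unfolding gbar_roots_def h_def by auto
  then have "z_Dp D p \<le> s" using z_Dp_le_root x(2) by fastforce
  moreover have "0 \<le> z_Dp D p" using z_Dp_bounds[OF three_point_integrable[OF tri] D p] by simp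
  ultimately show ?thesis unfolding q_Dp_def g_Dp_def
    using thinned_arg_bounds[of p] thinned_arg_mono[of p] p s
    by (intro f_D_mono) auto
qed

lemma q_Dp_three_point_reduction:
  assumes D: "D \<in> B_class \<mu>" and \<mu>: "\<mu> > 0" and p: "0 < p" "p \<le> 1"
  obtains k D' where "D' \<in> B_class \<mu>" "three_point D' k" "q_Dp D' p \<le> q_Dp D p"
proof (cases "z_Dp D p = 1")
  case True
  have "(^) (1::real) = (\<lambda>_::nat. 1)" by (rule ext) simp
  then have "q_Dp D p = 1" unfolding q_Dp_def g_Dp_def True f_D_def by simp
  moreover obtain D' k where D': "D' \<in> B_class \<mu>" "three_point D' k"
    using B_class_three_point_nonempty[OF \<mu>] by auto
  moreover have "q_Dp D' p \<le> 1"
    using q_Dp_bounds[OF three_point_integrable[OF D'(2)] _ p] D'(1) \<mu> by (auto simp: B_class_def)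
  ultimately show ?thesis using that by auto
next
  case False
  have law: "integrable (measure_pmf D) real" "mean_D D = \<mu>" using D by (auto simp: B_class_def)
  note z = z_Dp_bounds[OF law(1) _ p, unfolded law(2), OF \<mu>]
  define t where "t = 1 - p + p * z_Dp D p"
  have t: "0 \<le> t" "t < 1"
    using thinned_arg_bounds[of p "z_Dp D p"] p z False by (auto simp: t_def)
  obtain k D' where D': "three_point D' k" "mean_D D' = \<mu>" "f_D D' t = f_D D t"
      "f_D_deriv D' t \<le> f_D_deriv D t"
    using three_point_reduction[OF law \<mu> t] by blast
  have "gbar_Dp D' p (z_Dp D p) \<le> gbar_Dp D p (z_Dp D p)"
    unfolding gbar_Dp_def fbar_D_def t_def[symmetric] D'(2) law(2) using D'(4) \<mu>
    by (simp add: divide_right_mono)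
  then have "q_Dp D' p \<le> g_Dp D' p (z_Dp D p)"
    using three_point_q_Dp_le[OF D'(1) _ p z(1,2)] z(3) D'(2) \<mu> by simp
  also have "\<dots> = q_Dp D p" unfolding g_Dp_def q_Dp_def t_def[symmetric] D'(3) ..
  finally have "q_Dp D' p \<le> q_Dp D p" .
  moreover have "D' \<in> B_class \<mu>"
    using D'(2) three_point_integrable[OF D'(1)] by (simp add: B_class_def)
  ultimately show ?thesis using that D'(1) by blast
qed

text \<open>A three-point law with parameter k and mean \<mu> is determined by b = pmf D (k + 1); the
  minimisation runs over the pairs (b, s) with gbar s \<le> s instead of (b, z_Dp D p).\<close>

definition mass_at_k :: "real \<Rightarrow> nat \<Rightarrow> real \<Rightarrow> real" where
  "mass_at_k \<mu> k b = (\<mu> - real (Suc k) * b) / real k"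

definition three_point_pgf :: "real \<Rightarrow> nat \<Rightarrow> real \<Rightarrow> real \<Rightarrow> real" where
  "three_point_pgf \<mu> k b r = 1 - mass_at_k \<mu> k b - b + r ^ k * mass_at_k \<mu> k b + r ^ Suc k * b"

definition three_point_fbar :: "real \<Rightarrow> nat \<Rightarrow> real \<Rightarrow> real \<Rightarrow> real" where
  "three_point_fbar \<mu> k b r = (real k * r ^ (k - 1) * mass_at_k \<mu> k b + real (Suc k) * r ^ k * b) / \<mu>"

definition three_point_feasible :: "real \<Rightarrow> real \<Rightarrow> nat \<Rightarrow> (real \<times> real) set" where
  "three_point_feasible \<mu> p k = {x. 0 \<le> fst x \<and> \<mu> - real k \<le> fst x \<and> real (Suc k) * fst x \<le> \<mu>
      \<and> 0 \<le> snd x \<and> snd x \<le> 1 \<and> three_point_fbar \<mu> k (fst x) (1 - p + p * snd x) \<le> snd x}"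

lemma three_point_feasible_compact:
  assumes "\<mu> > 0" "k \<ge> 1"
  shows "compact (three_point_feasible \<mu> p k)"
proof (rule compact_eq_bounded_closed[THEN iffD2], rule conjI)
  have "x \<in> cbox (\<mu> - real k, 0) (\<mu>, 1)" if "x \<in> three_point_feasible \<mu> p k" for x
  proof -
    have "1 * fst x \<le> real (Suc k) * fst x"
      using that by (intro mult_right_mono) (auto simp: three_point_feasible_def)
    then show ?thesis using that by (auto simp: three_point_feasible_def cbox_Pair_eq mem_Times_iff)
  qed
  then show "bounded (three_point_feasible \<mu> p k)"
    by (intro bounded_subset[OF bounded_cbox]) blast
  show "closed (three_point_feasible \<mu> p k)"
    unfolding three_point_feasible_def three_point_fbar_def mass_at_k_def using assms
    by (intro closed_Collect_conj closed_Collect_le; intro continuous_intros) auto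
qed

lemma three_point_pgf_fbar:
  assumes tri: "three_point D k" and "mean_D D = \<mu>"
  shows "f_D D r = three_point_pgf \<mu> k (pmf D (Suc k)) r"
    and "fbar_D D r = three_point_fbar \<mu> k (pmf D (Suc k)) r"
proof -
  have k: "k \<ge> 1" "pmf D 0 + pmf D k + pmf D (Suc k) = 1" using tri by (auto simp: three_point_def)
  have "pmf D k = mass_at_k \<mu> k (pmf D (Suc k))"
    using three_point_mean_pgf(1)[OF tri] assms(2) k(1) by (simp add: mass_at_k_def field_simps)
  moreover have "pmf D 0 = 1 - pmf D k - pmf D (Suc k)" using k(2) by simp
  ultimately show "f_D D r = three_point_pgf \<mu> k (pmf D (Suc k)) r"
    and "fbar_D D r = three_point_fbar \<mu> k (pmf D (Suc k)) r"
    unfolding three_point_pgf_def three_point_fbar_def fbar_D_def assms(2) three_point_mean_pgf[OF tri]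
    by (simp_all add: algebra_simps)
qed

lemma three_point_feasible_of_law:
  assumes D: "D \<in> B_class \<mu>" "three_point D k" and \<mu>: "\<mu> > 0" and p: "0 < p" "p \<le> 1"
  shows "(pmf D (Suc k), z_Dp D p) \<in> three_point_feasible \<mu> p k"
    and "three_point_pgf \<mu> k (pmf D (Suc k)) (1 - p + p * z_Dp D p) = q_Dp D p"
proof -
  have m: "mean_D D = \<mu>" using D(1) by (simp add: B_class_def)
  have k: "k \<ge> 1" "pmf D 0 + pmf D k + pmf D (Suc k) = 1" using D(2) by (auto simp: three_point_def)
  have mean: "\<mu> = real k * pmf D k + real (Suc k) * pmf D (Suc k)"
    using three_point_mean_pgf(1)[OF D(2)] m by simp
  have "1 - pmf D 0 = pmf D k + pmf D (Suc k)" using k(2) by simp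
  moreover have "\<mu> - pmf D (Suc k) = real k * (pmf D k + pmf D (Suc k))"
    using mean by (simp add: algebra_simps)
  ultimately have "\<mu> - pmf D (Suc k) = real k * (1 - pmf D 0)" by simp
  then have "\<mu> - real k \<le> pmf D (Suc k)" using mult_left_le[of "1 - pmf D 0" "real k"] by simp
  moreover have "real (Suc k) * pmf D (Suc k) \<le> \<mu>" using mean by simp
  moreover note z = z_Dp_bounds[OF three_point_integrable[OF D(2)] _ p, unfolded m, OF \<mu>]
  ultimately show "(pmf D (Suc k), z_Dp D p) \<in> three_point_feasible \<mu> p k"
    using three_point_pgf_fbar(2)[OF D(2) m] by (simp add: three_point_feasible_def gbar_Dp_def)
  show "three_point_pgf \<mu> k (pmf D (Suc k)) (1 - p + p * z_Dp D p) = q_Dp D p"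
    unfolding q_Dp_def g_Dp_def three_point_pgf_fbar(1)[OF D(2) m] ..
qed

lemma three_point_law_of_feasible:
  assumes x: "x \<in> three_point_feasible \<mu> p k" and k: "k \<ge> 1" and \<mu>: "\<mu> > 0" and p: "0 < p" "p \<le> 1"
  obtains D where "D \<in> B_class \<mu>" "three_point D k"
    "q_Dp D p \<le> three_point_pgf \<mu> k (fst x) (1 - p + p * snd x)"
proof -
  have x': "0 \<le> fst x" "\<mu> - real k \<le> fst x" "real (Suc k) * fst x \<le> \<mu>" "0 \<le> snd x" "snd x \<le> 1"
    "three_point_fbar \<mu> k (fst x) (1 - p + p * snd x) \<le> snd x"
    using x by (auto simp: three_point_feasible_def)
  obtain D where D: "three_point D k" "D \<in> B_class \<mu>" "pmf D (Suc k) = fst x"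
    using three_point_with_mean[OF k x'(1-3)] by blast
  have m: "mean_D D = \<mu>" using D(2) by (simp add: B_class_def)
  have "q_Dp D p \<le> g_Dp D p (snd x)"
    using three_point_q_Dp_le[OF D(1) _ p x'(4,5)] x'(6) m \<mu>
    by (simp add: gbar_Dp_def three_point_pgf_fbar(2)[OF D(1) m] D(3))
  also have "\<dots> = three_point_pgf \<mu> k (fst x) (1 - p + p * snd x)"
    unfolding g_Dp_def three_point_pgf_fbar(1)[OF D(1) m] D(3) ..
  finally show ?thesis using that D(1,2) by blast
qed

lemma three_point_minimiser_fixed_k:
  assumes ex: "D0 \<in> B_class \<mu>" "three_point D0 k" and \<mu>: "\<mu> > 0" and p: "0 < p" "p \<le> 1"
  obtains Ds where "Ds \<in> B_class \<mu>" "three_point Ds k"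
    "\<And>D. D \<in> B_class \<mu> \<Longrightarrow> three_point D k \<Longrightarrow> q_Dp Ds p \<le> q_Dp D p"
proof -
  let ?V = "\<lambda>x. three_point_pgf \<mu> k (fst x) (1 - p + p * snd x)"
  have k: "k \<ge> 1" using ex(2) by (simp add: three_point_def)
  have "three_point_feasible \<mu> p k \<noteq> {}" using three_point_feasible_of_law(1)[OF ex \<mu> p] by blast
  moreover have "continuous_on (three_point_feasible \<mu> p k) ?V"
    unfolding three_point_pgf_def mass_at_k_def by (intro continuous_intros) (use k in auto)
  ultimately obtain x where x: "x \<in> three_point_feasible \<mu> p k"
      "\<And>y. y \<in> three_point_feasible \<mu> p k \<Longrightarrow> ?V x \<le> ?V y"
    using continuous_attains_inf[OF three_point_feasible_compact[OF \<mu> k]] by blast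
  obtain Ds where Ds: "Ds \<in> B_class \<mu>" "three_point Ds k" "q_Dp Ds p \<le> ?V x"
    using three_point_law_of_feasible[OF x(1) k \<mu> p] by blast
  have "q_Dp Ds p \<le> q_Dp D p" if "D \<in> B_class \<mu>" "three_point D k" for D
    using three_point_feasible_of_law[OF that \<mu> p] x(2) Ds(3) by fastforce
  then show ?thesis using that Ds(1,2) by blast
qed

lemma three_point_q_Dp_lower:
  assumes D: "D \<in> B_class \<mu>" "three_point D k" and \<mu>: "\<mu> > 0" and p: "0 < p" "p \<le> 1"
  shows "1 - \<mu> / real k \<le> q_Dp D p"
proof -
  have m: "mean_D D = \<mu>" using D(1) by (simp add: B_class_def)
  have k: "k \<ge> 1" "pmf D 0 + pmf D k + pmf D (Suc k) = 1" using D(2) by (auto simp: three_point_def)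
  define r where "r = 1 - p + p * z_Dp D p"
  have "0 \<le> r"
    using thinned_arg_bounds(1)[of p "z_Dp D p"] z_Dp_bounds[OF three_point_integrable[OF D(2)] _ p] m \<mu> p
    by (simp add: r_def)
  then have "pmf D 0 \<le> q_Dp D p"
    unfolding q_Dp_def g_Dp_def three_point_mean_pgf(2)[OF D(2)] r_def[symmetric] by simp
  moreover have "real k * (pmf D k + pmf D (Suc k)) \<le> \<mu>"
    using three_point_mean_pgf(1)[OF D(2)] m by (simp add: algebra_simps)
  then have "pmf D k + pmf D (Suc k) \<le> \<mu> / real k"
    using k(1) by (simp add: pos_le_divide_eq mult.commute)
  ultimately show ?thesis using k(2) by linarith
qed

lemma three_point_q_Dp_gt_for_large_k:
  assumes q: "q < 1" and \<mu>: "\<mu> > 0" and p: "0 < p" "p \<le> 1"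
  obtains N where "\<And>D k. D \<in> B_class \<mu> \<Longrightarrow> three_point D k \<Longrightarrow> N \<le> k \<Longrightarrow> q < q_Dp D p"
proof -
  obtain N :: nat where N: "\<mu> / (1 - q) < real N" using reals_Archimedean2 by blast
  moreover have "0 < \<mu> / (1 - q)" using q \<mu> by simp
  ultimately have N0: "0 < real N" by linarith
  have "\<mu> < real N * (1 - q)" using N q by (simp add: divide_less_eq mult.commute)
  then have gap: "\<mu> / real N < 1 - q" using N0 by (simp add: divide_less_eq mult.commute)
  have "q < q_Dp D p" if "D \<in> B_class \<mu>" "three_point D k" "N \<le> k" for D k
  proof -
    have "\<mu> / real k \<le> \<mu> / real N" using that(3) N0 \<mu> by (simp add: frac_le)
    then show ?thesis using three_point_q_Dp_lower[OF that(1,2) \<mu> p] gap by linarith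
  qed
  then show ?thesis using that by blast
qed

lemma finite_union_minimiser:
  fixes q :: "'a \<Rightarrow> 'b::linorder"
  assumes K: "finite K" "K \<noteq> {}" and min: "\<And>k. k \<in> K \<Longrightarrow> \<exists>x\<in>A k. \<forall>y\<in>A k. q x \<le> q y"
  obtains x where "x \<in> (\<Union>k\<in>K. A k)" "\<And>y. y \<in> (\<Union>k\<in>K. A k) \<Longrightarrow> q x \<le> q y"
proof -
  obtain f where f: "\<And>k. k \<in> K \<Longrightarrow> f k \<in> A k \<and> (\<forall>y\<in>A k. q (f k) \<le> q y)"
    using min by metis
  obtain m where m: "m \<in> (\<lambda>k. q (f k)) ` K" "\<not> (\<exists>x\<in>(\<lambda>k. q (f k)) ` K. x < m)"
    using ex_min_if_finite[of "(\<lambda>k. q (f k)) ` K"] K by blast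
  then obtain ks where ks: "ks \<in> K" "\<And>k. k \<in> K \<Longrightarrow> q (f ks) \<le> q (f k)"
    by (auto simp: not_less)
  show ?thesis
  proof (rule that[of "f ks"])
    show "f ks \<in> (\<Union>k\<in>K. A k)" using f ks(1) by blast
    show "q (f ks) \<le> q y" if "y \<in> (\<Union>k\<in>K. A k)" for y
      using that f ks(2) by (meson UN_E order_trans)
  qed
qed

lemma three_point_minimiser_below_one:
  assumes D1: "D1 \<in> B_class \<mu>" "three_point D1 k1" "q_Dp D1 p < 1" and \<mu>: "\<mu> > 0" and p: "0 < p" "p \<le> 1"
  obtains Ds k where "Ds \<in> B_class \<mu>" "three_point Ds k"
    "\<And>D k'. D \<in> B_class \<mu> \<Longrightarrow> three_point D k' \<Longrightarrow> q_Dp Ds p \<le> q_Dp D p"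
proof -
  obtain N where large: "\<And>D k. D \<in> B_class \<mu> \<Longrightarrow> three_point D k \<Longrightarrow> N \<le> k \<Longrightarrow> q_Dp D1 p < q_Dp D p"
    using three_point_q_Dp_gt_for_large_k[OF D1(3) \<mu> p] by blast
  define A where "A k = {D \<in> B_class \<mu>. three_point D k}" for k
  define K where "K = {k. k < N \<and> A k \<noteq> {}}"
  have "k1 < N" using large[OF D1(1,2)] by (meson less_irrefl not_le)
  then have k1: "k1 \<in> K" using D1(1,2) by (auto simp: K_def A_def)
  have "\<exists>Ds\<in>A k. \<forall>D\<in>A k. q_Dp Ds p \<le> q_Dp D p" if k: "k \<in> K" for k
  proof -
    obtain D0 where D0: "D0 \<in> B_class \<mu>" "three_point D0 k" using k by (auto simp: K_def A_def)
    show ?thesis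
      by (rule three_point_minimiser_fixed_k[OF D0 \<mu> p]) (auto simp: A_def)
  qed
  moreover have "finite K" by (simp add: K_def)
  ultimately obtain Ds where Ds: "Ds \<in> (\<Union>k\<in>K. A k)"
      and min: "\<And>D. D \<in> (\<Union>k\<in>K. A k) \<Longrightarrow> q_Dp Ds p \<le> q_Dp D p"
    using finite_union_minimiser[of K A "\<lambda>D. q_Dp D p"] k1 by blast
  have "q_Dp Ds p \<le> q_Dp D p" if D: "D \<in> B_class \<mu>" "three_point D k" for D k
  proof (cases "k < N")
    case True
    then show ?thesis using min D by (auto simp: K_def A_def)
  next
    case False
    then have "q_Dp D1 p < q_Dp D p" using large[OF D] by simp
    moreover have "q_Dp Ds p \<le> q_Dp D1 p" using min D1(1,2) k1 by (auto simp: A_def)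
    ultimately show ?thesis by linarith
  qed
  then show ?thesis using that Ds by (auto simp: A_def)
qed

lemma three_point_minimiser:
  assumes \<mu>: "\<mu> > 0" and p: "0 < p" "p \<le> 1"
  obtains Ds k where "Ds \<in> B_class \<mu>" "three_point Ds k"
    "\<And>D k'. D \<in> B_class \<mu> \<Longrightarrow> three_point D k' \<Longrightarrow> q_Dp Ds p \<le> q_Dp D p"
proof (cases "\<exists>D k. D \<in> B_class \<mu> \<and> three_point D k \<and> q_Dp D p < 1")
  case True
  then show ?thesis using three_point_minimiser_below_one[OF _ _ _ \<mu> p] that by blast
next
  case False
  obtain D0 k0 where D0: "D0 \<in> B_class \<mu>" "three_point D0 k0"
    using B_class_three_point_nonempty[OF \<mu>] by blast
  have "q_Dp D0 p \<le> 1"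
    using q_Dp_bounds[OF three_point_integrable[OF D0(2)] _ p] D0(1) \<mu> by (simp add: B_class_def)
  then show ?thesis using that[OF D0] False by fastforce
qed

theorem theorem4p1:
  fixes \<mu> p :: real
  assumes "\<mu> > 0" and "0 < p" and "p \<le> 1"
  shows "\<exists>k::nat. k \<ge> 1 \<and> (\<exists>D\<in>B_class \<mu>.
           pmf D 0 + pmf D k + pmf D (k + 1) = 1 \<and>
           q_Dp D p = (INF D'\<in>B_class \<mu>. q_Dp D' p))"
proof -
  obtain Ds k where Ds: "Ds \<in> B_class \<mu>" "three_point Ds k"
    and min: "\<And>D k'. D \<in> B_class \<mu> \<Longrightarrow> three_point D k' \<Longrightarrow> q_Dp Ds p \<le> q_Dp D p"
    using three_point_minimiser[OF assms] by blast
  have "q_Dp Ds p \<le> q_Dp D p" if D: "D \<in> B_class \<mu>" for D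
  proof -
    obtain k' D' where "D' \<in> B_class \<mu>" "three_point D' k'" "q_Dp D' p \<le> q_Dp D p"
      using q_Dp_three_point_reduction[OF D assms] by blast
    then show ?thesis using min by fastforce
  qed
  then have "q_Dp Ds p = (INF D'\<in>B_class \<mu>. q_Dp D' p)"
    using Ds(1) by (intro cInf_eq_minimum[symmetric]) auto
  then show ?thesis using Ds by (auto simp: three_point_def)
qed

end
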